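(* Let $R\in\mathbb R$ and let $f:[0,R)\to\mathbb R$ be continuously differentiable and satisfy (h1) $f(0)>0$, $f'(0)=-1$; (h2) $f'$ is strictly increasing and convex; (h3) $f(t)<0$ for some $t\in(0,R)$. Let $\beta:=\sup_{t\in[0,R)}-f(t)$ and $\bar t:=\sup\{t\in[0,R):f'(t)<0\}$. If $0\le\rho<\beta/2$, then $\rho<\bar t/2<\bar t$ and $f'(\rho)<0$. *)

theory Defs
  imports "HOL-Analysis.Analysis"
begin

end

theory Submission
  imports Defs
begin

text \<open>Write \<open>\<beta>\<close> for the supremum of \<open>-f\<close> and \<open>t\<^sub>0\<close> for the supremum of the set where \<open>f'\<close> is negative.
  Since \<open>f'\<close> is increasing with \<open>f' 0 = -1\<close>, we have \<open>f' \<ge> -1\<close>, so \<open>f t \<ge> f 0 - t\<close>; beyond \<open>t\<^sub>0\<close>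
  the function \<open>f\<close> no longer decreases. Hence \<open>-f t \<le> t\<^sub>0 - f 0 < t\<^sub>0\<close> for every \<open>t\<close>, i.e.\ \<open>\<beta> < t\<^sub>0\<close>,
  and \<open>\<beta> > 0\<close> because \<open>f\<close> takes a negative value. So \<open>\<rho> < \<beta>/2 < t\<^sub>0/2 < t\<^sub>0\<close>, and some \<open>s > \<rho>\<close>
  has \<open>f' s < 0\<close>, whence \<open>f' \<rho> < f' s < 0\<close>.\<close>

lemma deriv_nonneg_imp_le_within:
  fixes g g' :: "real \<Rightarrow> real"
  assumes deriv: "\<And>t. t \<in> S \<Longrightarrow> (g has_real_derivative g' t) (at t within S)"
    and "a \<le> b" "{a..b} \<subseteq> S" "{a<..<b} \<subseteq> interior S"
    and nonneg: "\<And>x. a < x \<Longrightarrow> x < b \<Longrightarrow> g' x \<ge> 0"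
  shows "g a \<le> g b"
proof (rule DERIV_nonneg_imp_increasing_open[OF \<open>a \<le> b\<close>])
  fix x assume x: "a < x" "x < b"
  then have "at x within S = at x"
    using assms(4) by (intro at_within_interior) auto
  then have "(g has_real_derivative g' x) (at x)"
    using deriv[of x] x assms(3) by (metis atLeastAtMost_iff less_imp_le subsetD)
  then show "\<exists>y. DERIV g x :> y \<and> y \<ge> 0"
    using nonneg x by blast
next
  show "continuous_on {a..b} g"
    using DERIV_continuous_on[OF deriv] assms(3) by (rule continuous_on_subset)
qed

lemma deriv_ge_imp_linear_lower_bound:
  fixes f f' :: "real \<Rightarrow> real"
  assumes deriv: "\<And>t. t \<in> {0..<R} \<Longrightarrow> (f has_real_derivative f' t) (at t within {0..<R})"
    and ge: "\<And>t. t \<in> {0..<R} \<Longrightarrow> f' t \<ge> m"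
    and t: "t \<in> {0..<R}"
  shows "f 0 + m * t \<le> f t"
proof -
  have "(\<lambda>s. f s - m * s) 0 \<le> (\<lambda>s. f s - m * s) t"
  proof (rule deriv_nonneg_imp_le_within[where S = "{0..<R}" and g = "\<lambda>s. f s - m * s" and g' = "\<lambda>s. f' s - m"])
    show "((\<lambda>s. f s - m * s) has_real_derivative f' s - m) (at s within {0..<R})"
      if "s \<in> {0..<R}" for s
      using that by (auto intro!: derivative_eq_intros deriv)
  qed (use t ge in auto)
  then show ?thesis by simp
qed

lemma neg_le_Sup_deriv_neg:
  fixes f f' :: "real \<Rightarrow> real"
  assumes deriv: "\<And>t. t \<in> {0..<R} \<Longrightarrow> (f has_real_derivative f' t) (at t within {0..<R})"
    and mono: "mono_on {0..<R} f'"
    and f'0: "f' 0 = -1"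
    and t: "t \<in> {0..<R}"
  shows "- f t \<le> Sup {s\<in>{0..<R}. f' s < 0} - f 0"
proof -
  define T where "T = {s\<in>{0..<R}. f' s < 0}"
  have "0 \<in> T" using t f'0 by (auto simp: T_def)
  have bdd: "bdd_above T" by (rule bdd_aboveI[of _ R]) (auto simp: T_def)
  have "0 \<le> Sup T" using cSup_upper[OF \<open>0 \<in> T\<close> bdd] .
  have lower: "f 0 - s \<le> f s" if "s \<in> {0..<R}" for s
    using deriv_ge_imp_linear_lower_bound[OF deriv _ that, of "-1"] mono_onD[OF mono, of 0] f'0
    by fastforce
  show ?thesis
  proof (cases "t \<le> Sup T")
    case True
    then show ?thesis using lower[OF t] by (simp add: T_def)
  next
    case False
    have "f (Sup T) \<le> f t"
    proof (rule deriv_nonneg_imp_le_within[OF deriv])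
      fix x assume x: "Sup T < x" "x < t"
      then have "x \<notin> T" using cSup_upper[OF _ bdd] by force
      then show "f' x \<ge> 0" using x \<open>0 \<le> Sup T\<close> t by (auto simp: T_def)
    qed (use False \<open>0 \<le> Sup T\<close> t in auto)
    moreover have "f 0 - Sup T \<le> f (Sup T)"
      using lower False \<open>0 \<le> Sup T\<close> t by auto
    ultimately show ?thesis by (simp add: T_def)
  qed
qed

theorem proposition5p2:
  fixes f f' :: "real \<Rightarrow> real" and R \<rho> :: real
  assumes deriv: "\<And>t. t \<in> {0..<R} \<Longrightarrow> (f has_real_derivative f' t) (at t within {0..<R})"
    and cont: "continuous_on {0..<R} f'"
    and h1: "f 0 > 0" "f' 0 = -1"
    and h2: "strict_mono_on {0..<R} f'" "convex_on {0..<R} f'"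
    and h3: "\<exists>t\<in>{0<..<R}. f t < 0"
    and rho: "0 \<le> \<rho>" "\<rho> < (SUP t\<in>{0..<R}. - f t) / 2"
  shows "\<rho> < Sup {t\<in>{0..<R}. f' t < 0} / 2
         \<and> Sup {t\<in>{0..<R}. f' t < 0} / 2 < Sup {t\<in>{0..<R}. f' t < 0}
         \<and> f' \<rho> < 0"
proof -
  define T where "T = {t\<in>{0..<R}. f' t < 0}"
  obtain t0 where t0: "t0 \<in> {0<..<R}" "f t0 < 0" using h3 by auto
  have bound: "- f t \<le> Sup T - f 0" if "t \<in> {0..<R}" for t
    unfolding T_def using neg_le_Sup_deriv_neg[OF deriv strict_mono_on_imp_mono_on[OF h2(1)] h1(2) that] .
  have "(SUP t\<in>{0..<R}. - f t) \<le> Sup T - f 0"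
    using t0 bound by (intro cSUP_least) auto
  moreover have "- f t0 \<le> (SUP t\<in>{0..<R}. - f t)"
    using t0 bound by (intro cSUP_upper bdd_aboveI2) auto
  ultimately have "\<rho> < Sup T / 2" "0 < Sup T"
    using rho h1(1) t0(2) by linarith+
  moreover obtain s where "s \<in> T" "\<rho> < s"
  proof -
    have "0 \<in> T" using t0(1) h1(2) by (auto simp: T_def)
    then show ?thesis
      using that less_cSupD[of T \<rho>] \<open>\<rho> < Sup T / 2\<close> \<open>0 < Sup T\<close> by fastforce
  qed
  then have "f' \<rho> < 0"
    using strict_mono_onD[OF h2(1), of \<rho> s] rho(1) by (auto simp: T_def)
  ultimately show ?thesis unfolding T_def by linarith
qed

end
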